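(* Let $x$ be a random vector in $\mathbb{R}^d$ and $g:\mathbb{R}^d\to[0,\infty)$ be a nonnegative lower semicontinuous function. Assume that \[\mathbb{E}[\|x\|^2]\le\beta_c\quad\text{and}\quad\mathbb{E}\Big[\frac{g(x)}{1+\|x\|^n}\Big]\le\alpha_c\] for some integer $n\ge1$ and positive numbers $\alpha_c,\beta_c$. Then \[\mathbb{E}\Big[g(x)^{\frac{1}{2\lceil n/2\rceil}}\Big]\le\big(1+\sqrt{\beta_c}\big)(2\alpha_c)^{\frac{1}{2\lceil n/2\rceil}}.\]
   Context: $\|\cdot\|$ is the Euclidean norm and $\lceil\cdot\rceil$ the ceiling function. *)

theory Defs
  imports "HOL-Analysis.Analysis" "HOL-Probability.Probability"
begin

definition lower_semicontinuous :: "('a::topological_space \<Rightarrow> real) \<Rightarrow> bool" where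
  "lower_semicontinuous g \<longleftrightarrow> (\<forall>t::real. open {y. t < g y})"

end

theory Submission
  imports Defs
begin

text \<open>Write \<open>g(x) = \<alpha> u (1 + \<parallel>x\<parallel>\<^sup>n)\<close> with \<open>E u \<le> 1\<close>. For \<open>p \<le> 1/n\<close>
  one has \<open>(1 + r\<^sup>n)\<^sup>p \<le> 2\<^sup>p (1 + r)\<close>, so \<open>g(x)\<^sup>p \<le> (2\<alpha>)\<^sup>p (u\<^sup>p + u\<^sup>p \<parallel>x\<parallel>)\<close>.
  Instead of Jensen and Cauchy-Schwarz, both terms are bounded pointwise by affine
  functions of \<open>u\<close> and \<open>\<parallel>x\<parallel>\<^sup>2\<close>: the tangent-line bound \<open>v\<^sup>q \<le> q v + 1 - q\<close>
  for \<open>q = p, 2p\<close>, and \<open>u\<^sup>p r \<le> (s u^(2p) + r\<^sup>2/s)/2\<close> with \<open>s = \<surd>\<beta>\<close>.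
  Integrating, the affine bound has expectation at most \<open>(2\<alpha>)\<^sup>p (1 + s)\<close>.\<close>

lemma powr_le_tangent_line:
  fixes u p :: real
  assumes "0 \<le> u" "0 < p" "p \<le> 1"
  shows "u powr p \<le> p * u + (1 - p)"
proof (cases "u = 0")
  case True
  then show ?thesis using assms by simp
next
  case False
  then have "u powr p * 1 powr (1 - p) \<le> p * u + (1 - p) * 1"
    using assms by (intro Youngs_inequality_0) auto
  then show ?thesis by simp
qed

lemma one_plus_power_powr_le:
  fixes r p :: real and n :: nat
  assumes "0 \<le> r" "0 < p" "real n * p \<le> 1"
  shows "(1 + r ^ n) powr p \<le> 2 powr p * (1 + r)"
proof -
  define m where "m = max 1 r"
  have m1: "1 \<le> m" by (simp add: m_def)
  have "r ^ n \<le> m ^ n"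
    using assms(1) by (intro power_mono) (auto simp: m_def)
  then have "1 + r ^ n \<le> 2 * m ^ n"
    using one_le_power[OF m1, of n] by linarith
  also have "m ^ n = m powr real n"
    using m1 by (simp add: powr_realpow)
  also have "\<dots> \<le> m powr (1 / p)"
    using m1 assms by (intro powr_mono) (auto simp: field_simps)
  finally have "(1 + r ^ n) powr p \<le> (2 * m powr (1 / p)) powr p"
    using assms by (intro powr_mono2) auto
  also have "\<dots> = 2 powr p * m"
    using m1 assms by (simp add: powr_mult powr_powr)
  also have "\<dots> \<le> 2 powr p * (1 + r)"
    using assms by (simp add: m_def)
  finally show ?thesis .
qed

lemma powr_mult_one_plus_le_affine:
  fixes u r s p :: real
  assumes "0 \<le> u" "0 \<le> r" "0 < s" "0 < p" "2 * p \<le> 1"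
  shows "u powr p * (1 + r) \<le> p * (1 + s) * u + (1 - p + (1 - 2 * p) * s / 2) + r\<^sup>2 / (2 * s)"
proof -
  have "(u powr p)\<^sup>2 = u powr (2 * p)"
    by (simp add: power2_eq_square powr_add[symmetric])
  also have "\<dots> \<le> 2 * p * u + (1 - 2 * p)"
    using powr_le_tangent_line[OF assms(1), of "2 * p"] assms by simp
  finally have tangent2: "(u powr p)\<^sup>2 \<le> 2 * p * u + (1 - 2 * p)" .
  have "u powr p * r \<le> (s * (u powr p)\<^sup>2 + r\<^sup>2 / s) / 2"
  proof -
    have "0 \<le> (s * u powr p - r)\<^sup>2" by simp
    then show ?thesis using assms(3) by (simp add: field_simps power2_eq_square)
  qed
  also have "\<dots> \<le> (s * (2 * p * u + (1 - 2 * p)) + r\<^sup>2 / s) / 2"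
    using tangent2 assms(3) by simp
  finally have "u powr p * r \<le> (s * (2 * p * u + (1 - 2 * p)) + r\<^sup>2 / s) / 2" .
  moreover have "u powr p \<le> p * u + (1 - p)"
    using powr_le_tangent_line[OF assms(1)] assms by simp
  ultimately show ?thesis by (simp add: field_simps)
qed

lemma powr_le_affine_bound:
  fixes G r a s p :: real and n :: nat
  assumes "0 \<le> G" "0 \<le> r" "0 < a" "0 < s" "0 < p" "2 * p \<le> 1" "real n * p \<le> 1"
  shows "G powr p \<le> (2 * a) powr p *
           (p * (1 + s) / a * (G / (1 + r ^ n)) + (1 - p + (1 - 2 * p) * s / 2) + r\<^sup>2 / (2 * s))"
proof -
  define u where "u = G / (1 + r ^ n) / a"
  have N: "0 < 1 + r ^ n" using assms(2) by (simp add: add_pos_nonneg)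
  have u0: "0 \<le> u" using assms N by (simp add: u_def)
  have "G powr p = a powr p * u powr p * (1 + r ^ n) powr p"
    using assms N by (simp add: u_def powr_mult[symmetric])
  also have "\<dots> \<le> a powr p * u powr p * (2 powr p * (1 + r))"
    using one_plus_power_powr_le[OF assms(2,5,7)] by (intro mult_left_mono) auto
  also have "\<dots> = (2 * a) powr p * (u powr p * (1 + r))"
    using assms by (simp add: powr_mult algebra_simps)
  also have "\<dots> \<le> (2 * a) powr p * (p * (1 + s) * u + (1 - p + (1 - 2 * p) * s / 2) + r\<^sup>2 / (2 * s))"
    using powr_mult_one_plus_le_affine[OF u0 assms(2,4,5,6)] by (intro mult_left_mono) auto
  finally show ?thesis by (simp add: u_def ac_simps)
qed

lemma (in prob_space) nn_integral_affine_le: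
  assumes "f \<in> borel_measurable M" "h \<in> borel_measurable M"
    and "\<And>\<omega>. 0 \<le> f \<omega>" "\<And>\<omega>. 0 \<le> h \<omega>" "0 \<le> A" "0 \<le> B" "0 \<le> C" "0 \<le> a" "0 \<le> b"
    and "(\<integral>\<^sup>+ \<omega>. ennreal (f \<omega>) \<partial>M) \<le> ennreal a" "(\<integral>\<^sup>+ \<omega>. ennreal (h \<omega>) \<partial>M) \<le> ennreal b"
  shows "(\<integral>\<^sup>+ \<omega>. ennreal (A * f \<omega> + B + C * h \<omega>) \<partial>M) \<le> ennreal (A * a + B + C * b)"
proof -
  have "(\<integral>\<^sup>+ \<omega>. ennreal (A * f \<omega> + B + C * h \<omega>) \<partial>M)
      = ennreal A * (\<integral>\<^sup>+ \<omega>. ennreal (f \<omega>) \<partial>M) + ennreal B + ennreal C * (\<integral>\<^sup>+ \<omega>. ennreal (h \<omega>) \<partial>M)"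
    using assms(1-7)
    by (simp add: ennreal_plus ennreal_mult nn_integral_add nn_integral_cmult emeasure_space_1)
  also have "\<dots> \<le> ennreal A * ennreal a + ennreal B + ennreal C * ennreal b"
    using assms(10,11) by (intro add_mono mult_left_mono order_refl) auto
  also have "\<dots> = ennreal (A * a + B + C * b)"
    using assms(5-9) by (simp add: ennreal_plus ennreal_mult)
  finally show ?thesis .
qed

lemma borel_measurable_lower_semicontinuous:
  fixes g :: "'a::topological_space \<Rightarrow> real"
  assumes "lower_semicontinuous g"
  shows "g \<in> borel_measurable borel"
  unfolding borel_measurable_iff_greater
  using assms by (auto simp: lower_semicontinuous_def)

lemma (in prob_space) nn_integral_powr_le_of_moment_bounds:
  fixes x :: "'a \<Rightarrow> 'b::real_normed_vector" and g :: "'b \<Rightarrow> real" and n :: nat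
  assumes "x \<in> borel_measurable M" "g \<in> borel_measurable borel" "\<And>y. 0 \<le> g y"
    and "0 < p" "2 * p \<le> 1" "real n * p \<le> 1" "0 < \<alpha>" "0 < \<beta>"
    and "(\<integral>\<^sup>+ \<omega>. ennreal (norm (x \<omega>) ^ 2) \<partial>M) \<le> ennreal \<beta>"
    and "(\<integral>\<^sup>+ \<omega>. ennreal (g (x \<omega>) / (1 + norm (x \<omega>) ^ n)) \<partial>M) \<le> ennreal \<alpha>"
  shows "(\<integral>\<^sup>+ \<omega>. ennreal (g (x \<omega>) powr p) \<partial>M) \<le> ennreal ((1 + sqrt \<beta>) * (2 * \<alpha>) powr p)"
proof -
  define s where "s = sqrt \<beta>"
  define c where "c = (2 * \<alpha>) powr p"
  define A where "A = c * p * (1 + s) / \<alpha>"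
  define B where "B = c * (1 - p + (1 - 2 * p) * s / 2)"
  define C where "C = c / (2 * s)"
  have s0: "0 < s" using assms(8) by (simp add: s_def)
  have coeffs: "0 \<le> A" "0 \<le> B" "0 \<le> C"
    using s0 assms(4,5,7) by (auto simp: A_def B_def C_def c_def)
  have gx: "(\<lambda>\<omega>. g (x \<omega>)) \<in> borel_measurable M"
    using measurable_compose[OF assms(1,2)] .
  have "(\<integral>\<^sup>+ \<omega>. ennreal (g (x \<omega>) powr p) \<partial>M)
      \<le> (\<integral>\<^sup>+ \<omega>. ennreal (A * (g (x \<omega>) / (1 + norm (x \<omega>) ^ n)) + B + C * norm (x \<omega>) ^ 2) \<partial>M)"
  proof (intro nn_integral_mono ennreal_leI)
    fix \<omega>
    have "g (x \<omega>) powr p \<le> c * (p * (1 + s) / \<alpha> * (g (x \<omega>) / (1 + norm (x \<omega>) ^ n))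
                                  + (1 - p + (1 - 2 * p) * s / 2) + norm (x \<omega>) ^ 2 / (2 * s))"
      unfolding c_def
      using powr_le_affine_bound[OF assms(3)[of "x \<omega>"] norm_ge_zero[of "x \<omega>"] assms(7) s0 assms(4,5,6)] .
    also have "\<dots> = A * (g (x \<omega>) / (1 + norm (x \<omega>) ^ n)) + B + C * norm (x \<omega>) ^ 2"
      by (simp add: A_def B_def C_def distrib_left)
    finally show "g (x \<omega>) powr p \<le> A * (g (x \<omega>) / (1 + norm (x \<omega>) ^ n)) + B + C * norm (x \<omega>) ^ 2" .
  qed
  also have "\<dots> \<le> ennreal (A * \<alpha> + B + C * \<beta>)"
    using gx assms by (intro nn_integral_affine_le coeffs) auto
  also have "A * \<alpha> + B + C * \<beta> = (1 + s) * c"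
    using s0 assms(7,8) by (simp add: A_def B_def C_def s_def field_simps power2_eq_square)
  finally show ?thesis by (simp add: s_def c_def)
qed

theorem lemma4p4:
  fixes M :: "'s measure"
    and x :: "'s \<Rightarrow> real ^ 'd"
    and g :: "real ^ 'd \<Rightarrow> real"
    and n :: nat
    and \<alpha>c \<beta>c :: real
  assumes "prob_space M"
    and "x \<in> borel_measurable M"
    and "\<And>y. g y \<ge> 0"
    and "lower_semicontinuous g"
    and "n \<ge> 1"
    and "\<alpha>c > 0" and "\<beta>c > 0"
    and "(\<integral>\<^sup>+ \<omega>. ennreal (norm (x \<omega>) ^ 2) \<partial>M) \<le> ennreal \<beta>c"
    and "(\<integral>\<^sup>+ \<omega>. ennreal (g (x \<omega>) / (1 + norm (x \<omega>) ^ n)) \<partial>M) \<le> ennreal \<alpha>c"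
  shows "(\<integral>\<^sup>+ \<omega>. ennreal (g (x \<omega>) powr (1 / (2 * real_of_int \<lceil>real n / 2\<rceil>))) \<partial>M)
           \<le> ennreal ((1 + sqrt \<beta>c) * (2 * \<alpha>c) powr (1 / (2 * real_of_int \<lceil>real n / 2\<rceil>)))"
proof -
  interpret prob_space M by fact
  define k where "k = 2 * real_of_int \<lceil>real n / 2\<rceil>"
  have "real n \<le> k"
    unfolding k_def using le_of_int_ceiling[of "real n / 2"] by linarith
  moreover have "2 \<le> k"
    using assms(5) by (simp add: k_def one_le_ceiling)
  ultimately have "0 < 1 / k" "2 * (1 / k) \<le> 1" "real n * (1 / k) \<le> 1"
    by (auto simp: field_simps)
  from nn_integral_powr_le_of_moment_bounds[OF assms(2)
        borel_measurable_lower_semicontinuous[OF assms(4)] assms(3) this assms(6-9)]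
  show ?thesis by (simp add: k_def)
qed

end
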